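(* Let $m\in\mathbb{N}$, let $\mathbb{R}^m$ carry a norm $\|\cdot\|$, and let $\mathcal{Y}\subseteq\mathbb{R}^m$ be bounded. Construct $(\mathfrak{C}_r)_{r\in\mathbb{N}_0}$ as follows. Let $C_0$ be an $m$-simplex with $C_0\supseteq\mathcal{Y}$ and $\mathfrak{C}_0:=\{C_0\}$. For $r=1,2,\ldots$: find a longest edge $E_{\boldsymbol{v},\boldsymbol{w}}$ of $\mathfrak{C}_{r-1}$, where an edge $E_{\boldsymbol{v},\boldsymbol{w}}:=\{\lambda\boldsymbol{v}+(1-\lambda)\boldsymbol{w}:0\le\lambda\le1\}$ is the segment between two extreme points $\boldsymbol{v},\boldsymbol{w}$ of some member of $\mathfrak{C}_{r-1}$; then obtain $\mathfrak{C}_r$ from $\mathfrak{C}_{r-1}$ by replacing every simplex $C\in\mathfrak{C}_{r-1}$ that has $E_{\boldsymbol{v},\boldsymbol{w}}$ as a face by the two simplices $\operatorname{conv}\big((V(C)\setminus\{\boldsymbol{v}\})\cup\{\tfrac{\boldsymbol{v}+\boldsymbol{w}}{2}\}\big)$ and $\operatorname{conv}\big((V(C)\setminus\{\boldsymbol{w}\})\cup\{\tfrac{\boldsymbol{v}+\boldsymbol{w}}{2}\}\big)$. Then $\mathfrak{C}_r$ is a simplicial cover of $\mathcal{Y}$ for every $r\in\mathbb{N}_0$, and $\lim_{r\to\infty}\eta(\mathfrak{C}_r)=0$.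
   Context: A convex $C'\subseteq C$ is a face of a convex set $C$ if $\lambda x_1+(1-\lambda)x_2\in C'$ with $0<\lambda<1$, $x_1,x_2\in C$ implies $x_1,x_2\in C'$; extreme points are singleton faces; $V(C)$ is the set of extreme points of $C$. A polyhedral cover of $\mathcal{Y}$ is a finite collection $\mathfrak{C}$ of polyhedra, each with an extreme point, whose union contains $\mathcal{Y}$, such that any two members with non-empty intersection intersect in a face of both; it is bounded if all members are bounded. A simplicial cover of a bounded $\mathcal{Y}\subseteq\mathbb{R}^m$ is a bounded polyhedral cover of $\mathcal{Y}$ all of whose members are $m$-simplices (convex hulls of $m+1$ affinely independent points). The mesh size is $\eta(\mathfrak{C}):=\max_{C\in\mathfrak{C}}\max_{\boldsymbol{v},\boldsymbol{v}'\in V(C)}\|\boldsymbol{v}-\boldsymbol{v}'\|$. *)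

theory Defs
  imports "HOL-Analysis.Analysis"
begin

text \<open>An arbitrary norm on a real vector space (R^m carries some norm, not necessarily Euclidean).\<close>
definition is_norm :: "('a::real_vector \<Rightarrow> real) \<Rightarrow> bool" where
  "is_norm N \<longleftrightarrow> (\<forall>x. N x = 0 \<longleftrightarrow> x = 0) \<and> (\<forall>a x. N (a *\<^sub>R x) = \<bar>a\<bar> * N x)
      \<and> (\<forall>x y. N (x + y) \<le> N x + N y)"

definition extreme_points :: "'a::real_vector set \<Rightarrow> 'a set" where
  "extreme_points C = {x. x extreme_point_of C}"

definition polyhedral_cover :: "'a::euclidean_space set \<Rightarrow> 'a set set \<Rightarrow> bool" where
  "polyhedral_cover Y \<CC> \<longleftrightarrow> finite \<CC>
     \<and> (\<forall>C\<in>\<CC>. polyhedron C \<and> (\<exists>x. x extreme_point_of C))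
     \<and> Y \<subseteq> \<Union>\<CC>
     \<and> (\<forall>C\<in>\<CC>. \<forall>D\<in>\<CC>. C \<inter> D \<noteq> {} \<longrightarrow> (C \<inter> D) face_of C \<and> (C \<inter> D) face_of D)"

definition bounded_polyhedral_cover :: "'a::euclidean_space set \<Rightarrow> 'a set set \<Rightarrow> bool" where
  "bounded_polyhedral_cover Y \<CC> \<longleftrightarrow> polyhedral_cover Y \<CC> \<and> (\<forall>C\<in>\<CC>. bounded C)"

definition simplicial_cover :: "(real^'m) set \<Rightarrow> (real^'m) set set \<Rightarrow> bool" where
  "simplicial_cover Y \<CC> \<longleftrightarrow> bounded_polyhedral_cover Y \<CC>
     \<and> (\<forall>C\<in>\<CC>. int CARD('m) simplex C)"

definition mesh_size :: "('a::real_vector \<Rightarrow> real) \<Rightarrow> 'a set set \<Rightarrow> real" where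
  "mesh_size N \<CC> = Max {N (v - v') | C v v'. C \<in> \<CC> \<and> v \<in> extreme_points C \<and> v' \<in> extreme_points C}"

definition is_edge_of :: "'a::real_vector \<Rightarrow> 'a \<Rightarrow> 'a set set \<Rightarrow> bool" where
  "is_edge_of v w \<CC> \<longleftrightarrow> (\<exists>C\<in>\<CC>. v \<in> extreme_points C \<and> w \<in> extreme_points C)"

text \<open>Longest edge w.r.t. N (length of closed_segment v w is N (v - w)).\<close>
definition is_longest_edge :: "('a::real_vector \<Rightarrow> real) \<Rightarrow> 'a \<Rightarrow> 'a \<Rightarrow> 'a set set \<Rightarrow> bool" where
  "is_longest_edge N v w \<CC> \<longleftrightarrow> is_edge_of v w \<CC>
     \<and> (\<forall>v' w'. is_edge_of v' w' \<CC> \<longrightarrow> N (v' - w') \<le> N (v - w))"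

definition bisect :: "'a::real_vector \<Rightarrow> 'a \<Rightarrow> 'a set set \<Rightarrow> 'a set set" where
  "bisect v w \<CC> =
     {C \<in> \<CC>. \<not> closed_segment v w face_of C}
     \<union> (\<Union>C\<in>{C \<in> \<CC>. closed_segment v w face_of C}.
          {convex hull (insert ((1/2) *\<^sub>R (v + w)) (extreme_points C - {v})),
           convex hull (insert ((1/2) *\<^sub>R (v + w)) (extreme_points C - {w}))})"

end

theory Submission
  imports Defs
begin

text \<open>
  Every \<open>\<CC> r\<close> consists of m-simplices any two of which meet in the convex hull of their common
  vertices. This survives a bisection step because, in barycentric coordinates \<open>\<lambda>\<close> with respect
  to the vertices of a simplex, the two halves along the edge from v to w are \<open>{\<lambda> v \<le> \<lambda> w}\<close> and
  \<open>{\<lambda> w \<le> \<lambda> v}\<close>, and uniqueness of barycentric coordinates computes every new intersection.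

  The longest edge lengths \<open>l r\<close> decrease: a new edge is either a half of the bisected edge or
  joins its midpoint to a vertex at distance at most \<open>l r\<close> from both ends. Suppose they
  converged to \<open>L > 0\<close>, and let \<open>U\<close> be a late \<open>l R\<close> with \<open>U - L\<close> tiny. For the thresholds
  \<open>t j = U - 2^j (U - L)\<close>, \<open>j \<le> (m + 1)\<^sup>2\<close>, the midpoint inequality shows that the ordered vertex
  pairs of a half at distance at least \<open>t j\<close> inject, missing \<open>(v, w)\<close>, into the pairs of its
  parent at distance at least \<open>t (j + 1)\<close>. Hence the rank \<open>#{j. j < #pairs at level j}\<close> of each
  half is smaller than that of its parent, and the sum of \<open>3 ^ rank\<close> over the triangulation would
  be a strictly decreasing sequence of natural numbers.
\<close>

section \<open>Barycentric coordinates\<close>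

definition barycentric :: "'a::real_vector set \<Rightarrow> ('a \<Rightarrow> real) \<Rightarrow> 'a \<Rightarrow> bool" where
  "barycentric S a x \<longleftrightarrow> (\<forall>s\<in>S. 0 \<le> a s) \<and> sum a S = 1 \<and> (\<Sum>s\<in>S. a s *\<^sub>R s) = x"

lemma convex_hull_finite_barycentric:
  "finite S \<Longrightarrow> x \<in> convex hull S \<longleftrightarrow> (\<exists>a. barycentric S a x)"
  by (auto simp: convex_hull_finite barycentric_def)

lemma barycentric_unique:
  fixes S :: "'a::euclidean_space set"
  assumes "\<not> affine_dependent S" "barycentric S a x" "barycentric S b x" "s \<in> S"
  shows "a s = b s"
proof (rule ccontr)
  assume ne: "a s \<noteq> b s"
  have "finite S" using assms(1) aff_independent_finite by blast
  moreover have "sum (\<lambda>s. a s - b s) S = 0" "(\<Sum>s\<in>S. (a s - b s) *\<^sub>R s) = 0"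
    using assms(2,3) by (simp_all add: barycentric_def sum_subtractf scaleR_diff_left)
  ultimately have "affine_dependent S"
    using ne assms(4) by (subst affine_dependent_explicit_finite) (auto intro!: exI[of _ "\<lambda>s. a s - b s"])
  then show False using assms(1) by blast
qed

lemma barycentric_mono_neutral:
  assumes "finite S" "T \<subseteq> S" "\<forall>s\<in>S-T. a s = 0"
  shows "barycentric S a x \<longleftrightarrow> barycentric T a x"
proof -
  have "sum a S = sum a T" "(\<Sum>s\<in>S. a s *\<^sub>R s) = (\<Sum>s\<in>T. a s *\<^sub>R s)"
    using assms by (auto intro!: sum.mono_neutral_right)
  then show ?thesis using assms unfolding barycentric_def by auto
qed

lemma convex_hull_subset_barycentric:
  assumes "finite S" "T \<subseteq> S"
  shows "x \<in> convex hull T \<longleftrightarrow> (\<exists>a. barycentric S a x \<and> (\<forall>s\<in>S-T. a s = 0))"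
proof
  assume "x \<in> convex hull T"
  then obtain a where a: "barycentric T a x"
    using convex_hull_finite_barycentric assms finite_subset by blast
  define a' where "a' s = (if s \<in> T then a s else 0)" for s
  have "barycentric T a' x"
    using a by (simp add: a'_def barycentric_def cong: sum.cong)
  then have "barycentric S a' x"
    using barycentric_mono_neutral[OF assms] by (simp add: a'_def)
  then show "\<exists>a. barycentric S a x \<and> (\<forall>s\<in>S-T. a s = 0)" by (auto simp: a'_def)
next
  assume "\<exists>a. barycentric S a x \<and> (\<forall>s\<in>S-T. a s = 0)"
  then show "x \<in> convex hull T"
    using barycentric_mono_neutral[OF assms] convex_hull_finite_barycentric assms finite_subset
    by metis
qed

lemma barycentric_insert:
  "finite S \<Longrightarrow> s \<notin> S \<Longrightarrow> barycentric (insert s S) a x \<longleftrightarrow>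
     0 \<le> a s \<and> (\<forall>t\<in>S. 0 \<le> a t) \<and> a s + sum a S = 1 \<and> a s *\<^sub>R s + (\<Sum>t\<in>S. a t *\<^sub>R t) = x"
  by (simp add: barycentric_def)

lemma barycentric_to_midpoint:
  assumes S: "finite S" "v \<in> S" "w \<in> S" "midpoint v w \<notin> S"
    and a: "barycentric S a x" "a v \<le> a w"
  shows "barycentric (insert (midpoint v w) (S - {v}))
           (a(midpoint v w := 2 * a v, w := a w - a v)) x"
proof -
  have vw: "v \<noteq> w"
    using S(2,4) by auto
  define m where "m = midpoint v w"
  define R where "R = S - {v, w}"
  have R: "finite R" "v \<notin> R" "w \<notin> R" "m \<notin> R" "m \<noteq> w"
    using S by (auto simp: R_def m_def)
  have SR: "S = insert v (insert w R)" "insert m (S - {v}) = insert m (insert w R)"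
    using S by (auto simp: R_def)
  have "(2 * a v) *\<^sub>R m = a v *\<^sub>R v + a v *\<^sub>R w"
    by (simp add: m_def midpoint_def scaleR_add_right)
  moreover have "sum (a(m := 2 * a v, w := a w - a v)) R = sum a R"
    "(\<Sum>s\<in>R. (a(m := 2 * a v, w := a w - a v)) s *\<^sub>R s) = (\<Sum>s\<in>R. a s *\<^sub>R s)"
    using R by (auto intro!: sum.cong)
  ultimately show ?thesis
    using a R vw unfolding m_def[symmetric] SR by (auto simp: barycentric_insert algebra_simps)
qed

lemma barycentric_from_midpoint:
  assumes S: "finite S" "v \<in> S" "w \<in> S" "midpoint v w \<notin> S"
    and b: "barycentric (insert (midpoint v w) (S - {v})) b x"
  shows "barycentric S (b(v := b (midpoint v w) / 2, w := b w + b (midpoint v w) / 2)) x"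
proof -
  have vw: "v \<noteq> w"
    using S(2,4) by auto
  define m where "m = midpoint v w"
  define R where "R = S - {v, w}"
  have R: "finite R" "v \<notin> R" "w \<notin> R" "m \<notin> R" "m \<noteq> w"
    using S by (auto simp: R_def m_def)
  have SR: "S = insert v (insert w R)" "insert m (S - {v}) = insert m (insert w R)"
    using S by (auto simp: R_def)
  have "b m *\<^sub>R m = (b m / 2) *\<^sub>R v + (b m / 2) *\<^sub>R w"
    by (simp add: m_def midpoint_def scaleR_add_right)
  moreover have "sum (b(v := b m / 2, w := b w + b m / 2)) R = sum b R"
    "(\<Sum>s\<in>R. (b(v := b m / 2, w := b w + b m / 2)) s *\<^sub>R s) = (\<Sum>s\<in>R. b s *\<^sub>R s)"
    using R by (auto intro!: sum.cong)
  ultimately show ?thesis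
    using b R vw unfolding m_def[symmetric] SR by (auto simp: barycentric_insert algebra_simps)
qed

section \<open>Bisecting a simplex\<close>

lemma card_exchange:
  assumes "finite S" "v \<in> S" "m \<notin> S"
  shows "card (insert m (S - {v})) = card S"
proof -
  have "card (insert m (S - {v})) = Suc (card (S - {v}))"
    using assms by (intro card_insert_disjoint) auto
  also have "\<dots> = card S"
    using assms(1,2) by (rule card_Suc_Diff1)
  finally show ?thesis .
qed

definition bisection_half :: "'a::real_vector \<Rightarrow> 'a \<Rightarrow> 'a set \<Rightarrow> 'a set" where
  "bisection_half v w S = convex hull (insert (midpoint v w) (S - {v}))"

lemma midpoint_notin_affine_independent:
  fixes S :: "'a::euclidean_space set"
  assumes "\<not> affine_dependent S" "v \<in> S" "w \<in> S" "v \<noteq> w"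
  shows "midpoint v w \<notin> S"
proof
  assume "midpoint v w \<in> S"
  then have "midpoint v w extreme_point_of convex hull S"
    using extreme_point_of_convex_hull_affine_independent[OF assms(1)] by blast
  moreover have "v \<in> convex hull S" "w \<in> convex hull S"
    using assms(2,3) by (auto intro: hull_inc)
  ultimately show False
    using assms(4) midpoint_in_open_segment[of v w] unfolding extreme_point_of_def by blast
qed

lemma midpoint_in_convex_hull:
  "v \<in> S \<Longrightarrow> w \<in> S \<Longrightarrow> midpoint v w \<in> convex hull S"
  using convexD[OF convex_convex_hull, of v S w "1/2" "1/2"]
  by (simp add: midpoint_def hull_inc scaleR_add_right)

lemma bisection_half_subset:
  "v \<in> S \<Longrightarrow> w \<in> S \<Longrightarrow> bisection_half v w S \<subseteq> convex hull S"
  unfolding bisection_half_def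
  by (intro convex_hull_subset) (auto intro: hull_inc midpoint_in_convex_hull)

lemma bisection_half_barycentric:
  assumes "finite S" "v \<in> S" "w \<in> S" "midpoint v w \<notin> S"
  shows "x \<in> bisection_half v w S \<longleftrightarrow> (\<exists>a. barycentric S a x \<and> a v \<le> a w)"
proof
  have vw: "v \<noteq> w"
    using assms(2,4) by auto
  assume "x \<in> bisection_half v w S"
  then obtain b where "barycentric (insert (midpoint v w) (S - {v})) b x"
    using assms(1) by (auto simp: bisection_half_def convex_hull_finite_barycentric)
  moreover from this have "0 \<le> b w"
    using assms(3) vw by (simp add: barycentric_def)
  ultimately show "\<exists>a. barycentric S a x \<and> a v \<le> a w"
    using barycentric_from_midpoint[OF assms] vw
    by (intro exI[of _ "b(v := b (midpoint v w) / 2, w := b w + b (midpoint v w) / 2)"]) simp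
next
  assume "\<exists>a. barycentric S a x \<and> a v \<le> a w"
  then show "x \<in> bisection_half v w S"
    using barycentric_to_midpoint[OF assms] assms(1)
    by (auto simp: bisection_half_def convex_hull_finite_barycentric)
qed

lemma convex_hull_subset_bisection_halves:
  assumes "finite S" "v \<in> S" "w \<in> S" "midpoint v w \<notin> S"
  shows "convex hull S \<subseteq> bisection_half v w S \<union> bisection_half w v S"
proof
  fix x assume "x \<in> convex hull S"
  then obtain a where "barycentric S a x"
    using assms(1) convex_hull_finite_barycentric by blast
  show "x \<in> bisection_half v w S \<union> bisection_half w v S"
  proof (cases "a v \<le> a w")
    case True
    then show ?thesis using \<open>barycentric S a x\<close> bisection_half_barycentric[OF assms] by blast
  next
    case False
    moreover have "midpoint w v \<notin> S"
      using assms(4) by (simp add: midpoint_sym)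
    ultimately show ?thesis
      using \<open>barycentric S a x\<close> bisection_half_barycentric[of S w v] assms(1-3) by auto
  qed
qed

lemma extreme_points_convex_hull_affine_independent:
  fixes S :: "'a::euclidean_space set"
  shows "\<not> affine_dependent S \<Longrightarrow> extreme_points (convex hull S) = S"
  using extreme_point_of_convex_hull_affine_independent unfolding extreme_points_def by blast

text \<open>Reflecting w in the midpoint recovers v, so both vertex sets span the same affine hull.\<close>
lemma affine_independent_insert_midpoint:
  fixes S :: "'a::euclidean_space set"
  assumes ai: "\<not> affine_dependent S" and vw: "v \<in> S" "w \<in> S" "v \<noteq> w"
  shows "\<not> affine_dependent (insert (midpoint v w) (S - {v}))"
proof -
  define m where "m = midpoint v w"
  have fin: "finite S" using ai aff_independent_finite by blast
  have mS: "m \<notin> S" using midpoint_notin_affine_independent[OF ai vw] by (simp add: m_def)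
  have card: "card (insert m (S - {v})) = card S"
    using card_exchange[OF fin vw(1) mS] .
  have "m \<in> affine hull S"
    using midpoint_in_convex_hull[OF vw(1,2)] convex_hull_subset_affine_hull by (auto simp: m_def)
  then have "affine hull (insert m (S - {v})) \<subseteq> affine hull S"
    by (intro hull_minimal) (auto intro: hull_inc)
  moreover have "v \<in> affine hull (insert m (S - {v}))"
  proof -
    have "m \<in> affine hull (insert m (S - {v}))" "w \<in> affine hull (insert m (S - {v}))"
      using vw by (auto intro: hull_inc)
    then have "(2::real) *\<^sub>R m + (-1::real) *\<^sub>R w \<in> affine hull (insert m (S - {v}))"
      by (intro mem_affine[OF affine_affine_hull]) auto
    moreover have "(2::real) *\<^sub>R m + (-1::real) *\<^sub>R w = v"
      by (simp add: m_def midpoint_def scaleR_add_right)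
    ultimately show ?thesis by simp
  qed
  then have "affine hull S \<subseteq> affine hull (insert m (S - {v}))"
    by (intro hull_minimal) (auto intro: hull_inc)
  ultimately have "aff_dim (insert m (S - {v})) = aff_dim S"
    by (metis aff_dim_affine_hull subset_antisym)
  then show ?thesis
    using ai card fin unfolding m_def[symmetric] by (simp add: affine_independent_iff_card)
qed

lemma extreme_points_bisection_half:
  fixes S :: "'a::euclidean_space set"
  assumes "\<not> affine_dependent S" "v \<in> S" "w \<in> S" "v \<noteq> w"
  shows "extreme_points (bisection_half v w S) = insert (midpoint v w) (S - {v})"
  unfolding bisection_half_def
  by (rule extreme_points_convex_hull_affine_independent[OF affine_independent_insert_midpoint[OF assms]])

lemma barycentric_Int_bisection_half:
  fixes S :: "'a::euclidean_space set"
  assumes ai: "\<not> affine_dependent S" and vw: "v \<in> S" "w \<in> S" "v \<noteq> w" and T: "T \<subseteq> S"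
    and x: "x \<in> convex hull T" "x \<in> bisection_half v w S"
  obtains a where "barycentric S a x" "\<forall>s\<in>S-T. a s = 0" "a v \<le> a w"
proof -
  have fin: "finite S" using ai aff_independent_finite by blast
  obtain a where a: "barycentric S a x" "\<forall>s\<in>S-T. a s = 0"
    using x(1) convex_hull_subset_barycentric[OF fin T] by blast
  obtain b where b: "barycentric S b x" "b v \<le> b w"
    using x(2) bisection_half_barycentric[OF fin vw(1,2) midpoint_notin_affine_independent[OF ai vw]]
    by blast
  have "a v \<le> a w"
    using b(2) barycentric_unique[OF ai a(1) b(1)] vw by simp
  with a that show thesis by blast
qed

lemma convex_hull_Int_bisection_half_edge:
  fixes S :: "'a::euclidean_space set"
  assumes ai: "\<not> affine_dependent S" and vw: "v \<in> T" "w \<in> T" "v \<noteq> w" and T: "T \<subseteq> S"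
  shows "convex hull T \<inter> bisection_half v w S = bisection_half v w T"
proof
  have fin: "finite S" using ai aff_independent_finite by blast
  have mT: "midpoint v w \<notin> T"
    using midpoint_notin_affine_independent[OF ai] vw T by blast
  show "convex hull T \<inter> bisection_half v w S \<subseteq> bisection_half v w T"
  proof
    fix x assume "x \<in> convex hull T \<inter> bisection_half v w S"
    then obtain a where a: "barycentric S a x" "\<forall>s\<in>S-T. a s = 0" "a v \<le> a w"
      using barycentric_Int_bisection_half[OF ai _ _ vw(3) T] vw T by blast
    then have "barycentric T a x"
      using barycentric_mono_neutral[OF fin T] by blast
    then show "x \<in> bisection_half v w T"
      using bisection_half_barycentric[OF finite_subset[OF T fin] vw(1,2) mT] a(3) by blast
  qed
  show "bisection_half v w T \<subseteq> convex hull T \<inter> bisection_half v w S"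
  proof (rule Int_greatest)
    show "bisection_half v w T \<subseteq> convex hull T"
      by (rule bisection_half_subset[OF vw(1,2)])
    show "bisection_half v w T \<subseteq> bisection_half v w S"
      unfolding bisection_half_def by (rule hull_mono) (use T in blast)
  qed
qed

lemma convex_hull_Int_bisection_half_non_edge:
  fixes S :: "'a::euclidean_space set"
  assumes ai: "\<not> affine_dependent S" and vw: "v \<in> S" "w \<in> S" "v \<noteq> w"
    and T: "T \<subseteq> S" "\<not> (v \<in> T \<and> w \<in> T)"
  shows "convex hull T \<inter> bisection_half v w S = convex hull (T - {v})"
proof
  have fin: "finite S" using ai aff_independent_finite by blast
  show "convex hull T \<inter> bisection_half v w S \<subseteq> convex hull (T - {v})"
  proof
    fix x assume "x \<in> convex hull T \<inter> bisection_half v w S"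
    then obtain a where a: "barycentric S a x" "\<forall>s\<in>S-T. a s = 0" "a v \<le> a w"
      using barycentric_Int_bisection_half[OF ai vw T(1)] by blast
    have "a v = 0"
      using a T(2) vw by (cases "v \<in> T") (auto simp: barycentric_def intro: antisym)
    then have "\<forall>s\<in>S-(T-{v}). a s = 0" using a(2) by blast
    then show "x \<in> convex hull (T - {v})"
      using convex_hull_subset_barycentric[OF fin] a(1) T(1) by blast
  qed
  show "convex hull (T - {v}) \<subseteq> convex hull T \<inter> bisection_half v w S"
    unfolding bisection_half_def by (rule Int_greatest; rule hull_mono) (use T(1) in blast)+
qed

lemma bisection_halves_Int:
  fixes S :: "'a::euclidean_space set"
  assumes ai: "\<not> affine_dependent S" and vw: "v \<in> S" "w \<in> S" "v \<noteq> w"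
  shows "bisection_half v w S \<inter> bisection_half w v S = convex hull (insert (midpoint v w) (S - {v, w}))"
proof
  define m where "m = midpoint v w"
  have fin: "finite S" using ai aff_independent_finite by blast
  have mS: "m \<notin> S" "midpoint w v \<notin> S"
    using midpoint_notin_affine_independent[OF ai vw] by (auto simp: m_def midpoint_sym)
  show "bisection_half v w S \<inter> bisection_half w v S \<subseteq> convex hull (insert m (S - {v, w}))"
  proof
    fix x assume "x \<in> bisection_half v w S \<inter> bisection_half w v S"
    then obtain a b where a: "barycentric S a x" "a v \<le> a w" and b: "barycentric S b x" "b w \<le> b v"
      using bisection_half_barycentric[OF fin vw(1,2)] bisection_half_barycentric[OF fin vw(2,1)] mS
      unfolding m_def by blast
    have "a v = a w"
      using a(2) b(2) barycentric_unique[OF ai a(1) b(1)] vw by force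
    let ?b = "a(m := 2 * a v, w := a w - a v)"
    have "barycentric (insert m (S - {v})) ?b x"
      using barycentric_to_midpoint[OF fin vw(1,2) _ a] mS(1) unfolding m_def by blast
    moreover have "\<forall>s \<in> insert m (S - {v}) - insert m (S - {v, w}). ?b s = 0"
      using \<open>a v = a w\<close> by auto
    ultimately show "x \<in> convex hull (insert m (S - {v, w}))"
      using convex_hull_subset_barycentric[of "insert m (S - {v})" "insert m (S - {v, w})"] fin
      by blast
  qed
  show "convex hull (insert m (S - {v, w})) \<subseteq> bisection_half v w S \<inter> bisection_half w v S"
    unfolding bisection_half_def m_def midpoint_sym[of w v] by (rule Int_greatest; rule hull_mono) blast+
qed

lemma simplex_extreme_points:
  assumes "n simplex C"
  shows "\<not> affine_dependent (extreme_points C)" "int (card (extreme_points C)) = n + 1"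
    "convex hull (extreme_points C) = C"
proof -
  obtain S where S: "\<not> affine_dependent S" "int (card S) = n + 1" "C = convex hull S"
    using assms unfolding simplex_def by blast
  moreover have "extreme_points C = S"
    using extreme_points_convex_hull_affine_independent[OF S(1)] S(3) by simp
  ultimately show "\<not> affine_dependent (extreme_points C)" "int (card (extreme_points C)) = n + 1"
    "convex hull (extreme_points C) = C"
    by auto
qed

lemma simplex_bisection_half:
  fixes S :: "'a::euclidean_space set"
  assumes "\<not> affine_dependent S" "v \<in> S" "w \<in> S" "v \<noteq> w" "int (card S) = n + 1"
  shows "n simplex bisection_half v w S"
proof -
  have "card (insert (midpoint v w) (S - {v})) = card S"
    by (rule card_exchange[OF aff_independent_finite[OF assms(1)] assms(2)
          midpoint_notin_affine_independent[OF assms(1-4)]])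
  then show ?thesis
    using affine_independent_insert_midpoint[OF assms(1-4)] assms(5)
    unfolding bisection_half_def by (auto intro: simplex_convex_hull)
qed

lemma closed_segment_face_of_convex_hull:
  fixes S :: "'a::euclidean_space set"
  assumes ai: "\<not> affine_dependent S"
  shows "closed_segment v w face_of convex hull S \<longleftrightarrow> v \<in> S \<and> w \<in> S"
proof
  assume "closed_segment v w face_of convex hull S"
  then obtain c where c: "c \<subseteq> S" "convex hull {v, w} = convex hull c"
    using face_of_convex_hull_affine_independent[OF ai] segment_convex_hull by metis
  have "\<not> affine_dependent c" using ai c(1) affine_dependent_subset by blast
  then have "c = {v, w}"
    using extreme_points_convex_hull_affine_independent[of c]
      extreme_points_convex_hull_affine_independent[of "{v, w}"] c(2) by simp
  then show "v \<in> S \<and> w \<in> S" using c(1) by blast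
next
  assume "v \<in> S \<and> w \<in> S"
  then show "closed_segment v w face_of convex hull S"
    unfolding face_of_convex_hull_affine_independent[OF ai] segment_convex_hull
    by (intro exI[of _ "{v, w}"]) auto
qed

section \<open>Conforming triangulations\<close>

text \<open>Stronger than the face-to-face condition of a polyhedral cover, and the form in which that
  condition survives bisection.\<close>
definition conforming_triangulation :: "nat \<Rightarrow> 'a::euclidean_space set set \<Rightarrow> bool" where
  "conforming_triangulation n \<K> \<longleftrightarrow> finite \<K> \<and> (\<forall>C\<in>\<K>. int n simplex C)
     \<and> (\<forall>C\<in>\<K>. \<forall>D\<in>\<K>. C \<inter> D = convex hull (extreme_points C \<inter> extreme_points D))"

definition edge_patch :: "'a::real_vector \<Rightarrow> 'a \<Rightarrow> 'a set set \<Rightarrow> 'a set set" where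
  "edge_patch v w \<K> = {C \<in> \<K>. v \<in> extreme_points C \<and> w \<in> extreme_points C}"

lemma edge_patch_commute: "edge_patch v w \<K> = edge_patch w v \<K>"
  by (auto simp: edge_patch_def)

lemma closed_segment_face_of_simplex:
  assumes "n simplex C"
  shows "closed_segment v w face_of C \<longleftrightarrow> v \<in> extreme_points C \<and> w \<in> extreme_points C"
  using closed_segment_face_of_convex_hull[OF simplex_extreme_points(1)[OF assms]]
  by (simp add: simplex_extreme_points(3)[OF assms])

lemma bisect_eq:
  assumes "\<forall>C\<in>\<K>. \<exists>n. n simplex C"
  shows "bisect v w \<K> = (\<K> - edge_patch v w \<K>)
     \<union> (\<lambda>C. bisection_half v w (extreme_points C)) ` edge_patch v w \<K>
     \<union> (\<lambda>C. bisection_half w v (extreme_points C)) ` edge_patch v w \<K>"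
proof -
  have e: "{C \<in> \<K>. \<not> closed_segment v w face_of C} = \<K> - edge_patch v w \<K>"
    "{C \<in> \<K>. closed_segment v w face_of C} = edge_patch v w \<K>"
    using assms closed_segment_face_of_simplex unfolding edge_patch_def by blast+
  have m: "(1/2) *\<^sub>R (v + w) = midpoint v w"
    by (simp add: midpoint_def)
  show ?thesis
    unfolding bisect_def e m bisection_half_def midpoint_sym[of w v] by blast
qed

lemma conforming_triangulation_memberD:
  assumes "conforming_triangulation n \<K>" "C \<in> \<K>"
  shows "\<not> affine_dependent (extreme_points C)" "finite (extreme_points C)"
    "card (extreme_points C) = n + 1" "convex hull (extreme_points C) = C"
proof -
  have "int n simplex C"
    using assms unfolding conforming_triangulation_def by blast
  note C = simplex_extreme_points[OF this]
  show "\<not> affine_dependent (extreme_points C)" "convex hull (extreme_points C) = C"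
    by (fact C(1), fact C(3))
  show "finite (extreme_points C)" "card (extreme_points C) = n + 1"
    using aff_independent_finite[OF C(1)] C(2) by auto
qed

lemma conforming_triangulation_singleton:
  "int n simplex C \<Longrightarrow> conforming_triangulation n {C}"
  using simplex_extreme_points(3)[of "int n" C] unfolding conforming_triangulation_def by simp

lemma midpoint_edge_notin_extreme_points:
  assumes \<K>: "conforming_triangulation n \<K>" and A: "A \<in> \<K>"
    and C: "C \<in> edge_patch v w \<K>" and vw: "v \<noteq> w"
  shows "midpoint v w \<notin> extreme_points A"
proof
  assume mA: "midpoint v w \<in> extreme_points A"
  have CK: "C \<in> \<K>" and vwC: "v \<in> extreme_points C" "w \<in> extreme_points C"
    using C by (auto simp: edge_patch_def)
  note C_simplex = conforming_triangulation_memberD[OF \<K> CK]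
  have AC: "A \<inter> C = convex hull (extreme_points A \<inter> extreme_points C)"
    using \<K> A CK unfolding conforming_triangulation_def by blast
  have "midpoint v w \<in> C"
    using midpoint_in_convex_hull[OF vwC] C_simplex(4) by simp
  moreover have "midpoint v w \<in> A"
    using mA extreme_point_of_def extreme_points_def by auto
  ultimately have "midpoint v w extreme_point_of convex hull (extreme_points A \<inter> extreme_points C)"
    using mA AC unfolding extreme_points_def extreme_point_of_def by blast
  then have "midpoint v w \<in> extreme_points C"
    using extreme_point_of_convex_hull by blast
  then show False
    using midpoint_notin_affine_independent[OF C_simplex(1) vwC vw] by blast
qed

lemma conforming_Int_bisection_half:
  assumes \<K>: "conforming_triangulation n \<K>" and A: "A \<in> \<K> - edge_patch v w \<K>"
    and C: "C \<in> edge_patch v w \<K>" and vw: "v \<noteq> w"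
  shows "A \<inter> bisection_half v w (extreme_points C)
       = convex hull (extreme_points A \<inter> extreme_points (bisection_half v w (extreme_points C)))"
proof -
  let ?S = "extreme_points C" and ?T = "extreme_points A \<inter> extreme_points C"
  have CK: "C \<in> \<K>" and vwC: "v \<in> ?S" "w \<in> ?S"
    using C by (auto simp: edge_patch_def)
  note C_simplex = conforming_triangulation_memberD[OF \<K> CK]
  have "A \<inter> bisection_half v w ?S = (A \<inter> C) \<inter> bisection_half v w ?S"
    using bisection_half_subset[OF vwC] C_simplex(4) by auto
  also have "\<dots> = convex hull ?T \<inter> bisection_half v w ?S"
    using \<K> A CK unfolding conforming_triangulation_def by auto
  also have "\<dots> = convex hull (?T - {v})"
    using A by (intro convex_hull_Int_bisection_half_non_edge[OF C_simplex(1) vwC vw])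
      (auto simp: edge_patch_def)
  also have "?T - {v} = extreme_points A \<inter> extreme_points (bisection_half v w ?S)"
    using midpoint_edge_notin_extreme_points[OF \<K> _ C vw] A
    by (auto simp: extreme_points_bisection_half[OF C_simplex(1) vwC vw])
  finally show ?thesis .
qed

lemma common_face_Int_bisection_half:
  assumes \<K>: "conforming_triangulation n \<K>" and C: "C \<in> edge_patch v w \<K>"
    and D: "D \<in> edge_patch v w \<K>" and vw: "v \<noteq> w"
  shows "convex hull (extreme_points C \<inter> extreme_points D) \<inter> bisection_half v w (extreme_points C)
       = bisection_half v w (extreme_points C \<inter> extreme_points D)"
  using C D convex_hull_Int_bisection_half_edge[OF conforming_triangulation_memberD(1)[OF \<K>] _ _ vw]
  by (auto simp: edge_patch_def)

lemma patch_bisection_halves_Int: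
  assumes \<K>: "conforming_triangulation n \<K>" and C1: "C1 \<in> edge_patch v w \<K>"
    and C2: "C2 \<in> edge_patch v w \<K>" and vw: "v \<noteq> w" and zz': "(z, z') \<in> {(v, w), (w, v)}"
  shows "bisection_half v w (extreme_points C1) \<inter> bisection_half z z' (extreme_points C2)
       = bisection_half v w (extreme_points C1 \<inter> extreme_points C2)
         \<inter> bisection_half z z' (extreme_points C1 \<inter> extreme_points C2)"
proof -
  let ?S1 = "extreme_points C1" and ?S2 = "extreme_points C2"
  let ?R = "?S1 \<inter> ?S2"
  have CK: "C1 \<in> \<K>" "C2 \<in> \<K>" and vw1: "v \<in> ?S1" "w \<in> ?S1" and zz'2: "z \<in> ?S2" "z' \<in> ?S2"
    using C1 C2 zz' by (auto simp: edge_patch_def)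
  have C12: "C1 \<inter> C2 = convex hull ?R"
    using \<K> CK unfolding conforming_triangulation_def by blast
  have "bisection_half v w ?S1 \<subseteq> C1" "bisection_half z z' ?S2 \<subseteq> C2"
    using bisection_half_subset[OF vw1] bisection_half_subset[OF zz'2]
      conforming_triangulation_memberD(4)[OF \<K>] CK by auto
  then have "bisection_half v w ?S1 \<inter> bisection_half z z' ?S2
      = (convex hull ?R \<inter> bisection_half v w ?S1) \<inter> (convex hull ?R \<inter> bisection_half z z' ?S2)"
    using C12 by blast
  moreover have "convex hull ?R \<inter> bisection_half v w ?S1 = bisection_half v w ?R"
    by (rule common_face_Int_bisection_half[OF \<K> C1 C2 vw])
  moreover have "C2 \<in> edge_patch z z' \<K>" "C1 \<in> edge_patch z z' \<K>" "z \<noteq> z'"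
    using C1 C2 zz' vw edge_patch_commute by auto
  then have "convex hull ?R \<inter> bisection_half z z' ?S2 = bisection_half z z' ?R"
    using common_face_Int_bisection_half[OF \<K>] by (metis Int_commute)
  ultimately show ?thesis
    by simp
qed

lemma conforming_Int_bisection_halves:
  assumes \<K>: "conforming_triangulation n \<K>" and C1: "C1 \<in> edge_patch v w \<K>"
    and C2: "C2 \<in> edge_patch v w \<K>" and vw: "v \<noteq> w"
  shows "bisection_half v w (extreme_points C1) \<inter> bisection_half v w (extreme_points C2)
       = convex hull (extreme_points (bisection_half v w (extreme_points C1))
                      \<inter> extreme_points (bisection_half v w (extreme_points C2)))"
    and "bisection_half v w (extreme_points C1) \<inter> bisection_half w v (extreme_points C2)
       = convex hull (extreme_points (bisection_half v w (extreme_points C1))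
                      \<inter> extreme_points (bisection_half w v (extreme_points C2)))"
proof -
  let ?S1 = "extreme_points C1" and ?S2 = "extreme_points C2"
  let ?R = "?S1 \<inter> ?S2"
  have CK: "C1 \<in> \<K>" "C2 \<in> \<K>" and vw1: "v \<in> ?S1" "w \<in> ?S1" and vw2: "v \<in> ?S2" "w \<in> ?S2"
    using C1 C2 by (auto simp: edge_patch_def)
  note S1 = conforming_triangulation_memberD(1)[OF \<K> CK(1)]
  note S2 = conforming_triangulation_memberD(1)[OF \<K> CK(2)]
  have R: "\<not> affine_dependent ?R" "v \<in> ?R" "w \<in> ?R"
    using S1 vw1 vw2 affine_dependent_subset by auto
  have "extreme_points (bisection_half v w ?S1) \<inter> extreme_points (bisection_half v w ?S2)
      = insert (midpoint v w) (?R - {v})"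
    by (auto simp: extreme_points_bisection_half[OF S1 vw1 vw]
        extreme_points_bisection_half[OF S2 vw2 vw])
  then show "bisection_half v w ?S1 \<inter> bisection_half v w ?S2
       = convex hull (extreme_points (bisection_half v w ?S1) \<inter> extreme_points (bisection_half v w ?S2))"
    using patch_bisection_halves_Int[OF \<K> C1 C2 vw, of v w] by (simp add: bisection_half_def)
  have "extreme_points (bisection_half v w ?S1) \<inter> extreme_points (bisection_half w v ?S2)
      = insert (midpoint v w) (?R - {v, w})"
    by (auto simp: extreme_points_bisection_half[OF S1 vw1 vw] midpoint_sym[of w v]
        extreme_points_bisection_half[OF S2 vw2(2,1) vw[symmetric]])
  then show "bisection_half v w ?S1 \<inter> bisection_half w v ?S2
       = convex hull (extreme_points (bisection_half v w ?S1) \<inter> extreme_points (bisection_half w v ?S2))"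
    using patch_bisection_halves_Int[OF \<K> C1 C2 vw, of w v] bisection_halves_Int[OF R vw]
    by (simp add: insert_commute)
qed

lemma bisect_cases:
  assumes \<K>: "conforming_triangulation n \<K>" and X: "X \<in> bisect v w \<K>"
  obtains "X \<in> \<K> - edge_patch v w \<K>"
  | C z z' where "(z, z') \<in> {(v, w), (w, v)}" "C \<in> edge_patch z z' \<K>"
      "X = bisection_half z z' (extreme_points C)"
proof -
  have simplices: "\<forall>C\<in>\<K>. \<exists>n. n simplex C"
    using \<K> unfolding conforming_triangulation_def by blast
  have "X \<in> \<K> - edge_patch v w \<K> \<or> (\<exists>C \<in> edge_patch v w \<K>.
      X = bisection_half v w (extreme_points C) \<or> X = bisection_half w v (extreme_points C))"
    using X unfolding bisect_eq[OF simplices] by blast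
  then show thesis
    using that edge_patch_commute[of v w] by blast
qed

lemma conforming_bisect_Int:
  assumes \<K>: "conforming_triangulation n \<K>" and vw: "v \<noteq> w"
    and X: "X \<in> bisect v w \<K>" and Y: "Y \<in> bisect v w \<K>"
  shows "X \<inter> Y = convex hull (extreme_points X \<inter> extreme_points Y)"
proof -
  have old_half: "A \<inter> H = convex hull (extreme_points A \<inter> extreme_points H)"
    if "A \<in> \<K> - edge_patch v w \<K>" "(z, z') \<in> {(v, w), (w, v)}" "C \<in> edge_patch z z' \<K>"
      "H = bisection_half z z' (extreme_points C)" for A H C z z'
    using conforming_Int_bisection_half[OF \<K> _ that(3)] that(1,2,4) vw edge_patch_commute[of v w]
    by fastforce
  show ?thesis
    using \<K> X
  proof (cases rule: bisect_cases)
    case X_old: 1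
    show ?thesis
      using \<K> Y
    proof (cases rule: bisect_cases)
      case 1
      then show ?thesis using X_old \<K> unfolding conforming_triangulation_def by blast
    next
      case 2
      then show ?thesis using X_old old_half by blast
    qed
  next
    case X_half: (2 C1 z1 z1')
    show ?thesis
      using \<K> Y
    proof (cases rule: bisect_cases)
      case 1
      then show ?thesis using X_half old_half by (metis Int_commute)
    next
      case (2 C2 z2 z2')
      then have "C2 \<in> edge_patch z1 z1' \<K>" "z1 \<noteq> z1'"
        using X_half vw edge_patch_commute by auto
      then show ?thesis
        using 2 X_half conforming_Int_bisection_halves[OF \<K> X_half(2)] vw by auto
    qed
  qed
qed

lemma conforming_bisect:
  assumes \<K>: "conforming_triangulation n \<K>" and vw: "v \<noteq> w"
  shows "conforming_triangulation n (bisect v w \<K>)"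
proof -
  have "int n simplex X" if "X \<in> bisect v w \<K>" for X
    using \<K> that
  proof (cases rule: bisect_cases)
    case (2 C z z')
    then have "C \<in> \<K>" "z \<in> extreme_points C" "z' \<in> extreme_points C" "z \<noteq> z'"
      using vw by (auto simp: edge_patch_def)
    then show ?thesis
      using 2(3) conforming_triangulation_memberD[OF \<K>] simplex_bisection_half by fastforce
  qed (use \<K> in \<open>auto simp: conforming_triangulation_def\<close>)
  moreover have "finite (bisect v w \<K>)"
    using \<K> unfolding bisect_def conforming_triangulation_def by simp
  ultimately show ?thesis
    using conforming_bisect_Int[OF \<K> vw] unfolding conforming_triangulation_def by blast
qed

lemma Union_subset_Union_bisect:
  assumes \<K>: "conforming_triangulation n \<K>" and vw: "v \<noteq> w"
  shows "\<Union>\<K> \<subseteq> \<Union>(bisect v w \<K>)"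
proof
  fix x assume "x \<in> \<Union>\<K>"
  then obtain C where C: "C \<in> \<K>" "x \<in> C" by blast
  have "\<forall>C\<in>\<K>. \<exists>n. n simplex C"
    using \<K> unfolding conforming_triangulation_def by blast
  note eq = bisect_eq[OF this, of v w]
  show "x \<in> \<Union>(bisect v w \<K>)"
  proof (cases "C \<in> edge_patch v w \<K>")
    case True
    then have vwC: "v \<in> extreme_points C" "w \<in> extreme_points C"
      by (auto simp: edge_patch_def)
    note S = conforming_triangulation_memberD[OF \<K> C(1)]
    have "x \<in> bisection_half v w (extreme_points C) \<union> bisection_half w v (extreme_points C)"
      using convex_hull_subset_bisection_halves[OF S(2) vwC
          midpoint_notin_affine_independent[OF S(1) vwC vw]] C(2) S(4) by blast
    then show ?thesis using True unfolding eq by blast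
  next
    case False
    then show ?thesis using C unfolding eq by blast
  qed
qed

lemma conforming_triangulation_simplicial_cover:
  fixes \<K> :: "(real^'m) set set"
  assumes \<K>: "conforming_triangulation CARD('m) \<K>" and Y: "Y \<subseteq> \<Union>\<K>"
  shows "simplicial_cover Y \<K>"
proof -
  have simplex: "int CARD('m) simplex C" if "C \<in> \<K>" for C
    using \<K> that unfolding conforming_triangulation_def by blast
  have "\<exists>x. x extreme_point_of C" if "C \<in> \<K>" for C
  proof -
    have "extreme_points C \<noteq> {}"
      using conforming_triangulation_memberD(3)[OF \<K> that] by auto
    then show ?thesis
      unfolding extreme_points_def by blast
  qed
  moreover have "C \<inter> D face_of C" if "C \<in> \<K>" "D \<in> \<K>" for C D
  proof -
    note S = conforming_triangulation_memberD[OF \<K> that(1)]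
    have "C \<inter> D = convex hull (extreme_points C \<inter> extreme_points D)"
      using \<K> that unfolding conforming_triangulation_def by blast
    then have "C \<inter> D face_of convex hull (extreme_points C)"
      unfolding face_of_convex_hull_affine_independent[OF S(1)] by blast
    then show ?thesis using S(4) by simp
  qed
  moreover have "finite \<K>"
    using \<K> unfolding conforming_triangulation_def by blast
  ultimately show ?thesis
    using Y simplex simplex_imp_polyhedron simplex_imp_polytope polytope_imp_bounded
    unfolding simplicial_cover_def bounded_polyhedral_cover_def polyhedral_cover_def
    by (metis Int_commute)
qed

section \<open>Norms and edge lengths\<close>

lemma
  fixes N :: "'a::real_vector \<Rightarrow> real"
  assumes "is_norm N"
  shows is_norm_nonneg: "0 \<le> N x"
    and is_norm_eq_zero: "N x = 0 \<longleftrightarrow> x = 0"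
    and is_norm_minus_commute: "N (a - b) = N (b - a)"
    and is_norm_midpoint_le: "2 * N (midpoint v w - u) \<le> N (v - u) + N (w - u)"
    and is_norm_midpoint_endpoint: "2 * N (midpoint v w - w) = N (v - w)"
proof -
  have zero: "N x = 0 \<longleftrightarrow> x = 0" and scale: "N (c *\<^sub>R x) = \<bar>c\<bar> * N x"
    and triangle: "N (x + y) \<le> N x + N y" for c x y
    using assms unfolding is_norm_def by blast+
  show "N x = 0 \<longleftrightarrow> x = 0" by (rule zero)
  have minus: "N (- x) = N x" for x
    using scale[of "-1" x] by simp
  show "N (a - b) = N (b - a)"
    using minus[of "a - b"] by simp
  show "0 \<le> N x"
    using triangle[of x "- x"] zero[of 0] minus[of x] by simp
  have "midpoint v w - u = (1/2) *\<^sub>R (v - u) + (1/2) *\<^sub>R (w - u)"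
    by (simp add: midpoint_def algebra_simps) (simp add: scaleR_add_left[symmetric])
  then show "2 * N (midpoint v w - u) \<le> N (v - u) + N (w - u)"
    using triangle[of "(1/2) *\<^sub>R (v - u)" "(1/2) *\<^sub>R (w - u)"] scale by simp
  have "midpoint v w - w = (1/2) *\<^sub>R (v - w)"
    by (simp add: midpoint_def algebra_simps) (simp add: scaleR_add_left[symmetric])
  then show "2 * N (midpoint v w - w) = N (v - w)"
    using scale by simp
qed

lemma mesh_size_eq_longest_edge:
  assumes "finite \<K>" "\<forall>C\<in>\<K>. finite (extreme_points C)" "is_longest_edge N v w \<K>"
  shows "mesh_size N \<K> = N (v - w)"
proof -
  have "{N (a - b) | C a b. C \<in> \<K> \<and> a \<in> extreme_points C \<and> b \<in> extreme_points C}
      = (\<Union>C\<in>\<K>. (\<lambda>(a, b). N (a - b)) ` (extreme_points C \<times> extreme_points C))"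
    by auto
  then have "finite {N (a - b) | C a b. C \<in> \<K> \<and> a \<in> extreme_points C \<and> b \<in> extreme_points C}"
    using assms(1,2) by simp
  then show ?thesis
    using assms(3) unfolding mesh_size_def is_longest_edge_def is_edge_of_def
    by (intro Max_eqI) auto
qed

lemma longest_edge_neq:
  assumes N: "is_norm N" and \<K>: "conforming_triangulation n \<K>" and n: "1 \<le> n"
    and longest: "is_longest_edge N v w \<K>"
  shows "v \<noteq> w"
proof
  assume "v = w"
  obtain C where C: "C \<in> \<K>"
    using longest unfolding is_longest_edge_def is_edge_of_def by blast
  have "\<not> card (extreme_points C) \<le> Suc 0"
    using conforming_triangulation_memberD(3)[OF \<K> C] n by simp
  then obtain a b where ab: "a \<in> extreme_points C" "b \<in> extreme_points C" "a \<noteq> b"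
    using card_le_Suc0_iff_eq[OF conforming_triangulation_memberD(2)[OF \<K> C]] by blast
  have "N (a - b) \<le> N (v - w)"
    using longest C ab unfolding is_longest_edge_def is_edge_of_def by blast
  moreover have "N (a - b) \<noteq> 0"
    using ab(3) is_norm_eq_zero[OF N] by simp
  ultimately show False
    using \<open>v = w\<close> is_norm_eq_zero[OF N, of 0] is_norm_nonneg[OF N, of "a - b"] by simp
qed

lemma is_norm_insert_midpoint_le:
  assumes N: "is_norm N" and vw: "v \<in> S" "w \<in> S" and S: "\<forall>a\<in>S. \<forall>b\<in>S. N (a - b) \<le> l"
  shows "\<forall>p\<in>insert (midpoint v w) S. \<forall>q\<in>insert (midpoint v w) S. N (p - q) \<le> l"
proof -
  have mid: "N (midpoint v w - q) \<le> l" if "q \<in> S" for q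
  proof -
    have "N (v - q) \<le> l" "N (w - q) \<le> l"
      using S vw that by auto
    then show ?thesis
      using is_norm_midpoint_le[OF N, of v w q] by simp
  qed
  have "N (p - q) \<le> l" if "p \<in> insert (midpoint v w) S" "q \<in> insert (midpoint v w) S" for p q
    using that S mid[of p] mid[of q] mid[OF vw(1)] is_norm_minus_commute[OF N, of p "midpoint v w"]
      is_norm_eq_zero[OF N, of 0] is_norm_nonneg[OF N, of "midpoint v w - v"]
    by (cases "p = midpoint v w"; cases "q = midpoint v w") auto
  then show ?thesis by blast
qed

lemma bisect_edge_le:
  assumes N: "is_norm N" and \<K>: "conforming_triangulation n \<K>"
    and longest: "is_longest_edge N v w \<K>" and vw: "v \<noteq> w"
    and ab: "is_edge_of a b (bisect v w \<K>)"
  shows "N (a - b) \<le> N (v - w)"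
proof -
  have edge: "\<forall>x\<in>extreme_points C. \<forall>y\<in>extreme_points C. N (x - y) \<le> N (v - w)" if "C \<in> \<K>" for C
    using longest that unfolding is_longest_edge_def is_edge_of_def by blast
  obtain X where X: "X \<in> bisect v w \<K>" "a \<in> extreme_points X" "b \<in> extreme_points X"
    using ab unfolding is_edge_of_def by blast
  from \<K> X(1) show ?thesis
  proof (cases rule: bisect_cases)
    case 1
    then show ?thesis using edge X by blast
  next
    case (2 C z z')
    then have CK: "C \<in> \<K>" and zC: "z \<in> extreme_points C" "z' \<in> extreme_points C" "z \<noteq> z'"
      using vw by (auto simp: edge_patch_def)
    then have "extreme_points X \<subseteq> insert (midpoint z z') (extreme_points C)"
      using 2(3) extreme_points_bisection_half[OF conforming_triangulation_memberD(1)[OF \<K> CK]] by auto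
    then show ?thesis
      using is_norm_insert_midpoint_le[OF N zC(1,2) edge[OF CK]] X(2,3) by blast
  qed
qed

section \<open>A potential for longest-edge bisection\<close>

definition long_pairs :: "('a::real_vector \<Rightarrow> real) \<Rightarrow> real \<Rightarrow> 'a set \<Rightarrow> ('a \<times> 'a) set" where
  "long_pairs N t S = {p \<in> S \<times> S. t \<le> N (fst p - snd p)}"

lemma card_long_pairs_le: "finite S \<Longrightarrow> card (long_pairs N t S) \<le> card S ^ 2"
  using card_mono[of "S \<times> S" "long_pairs N t S"]
  by (auto simp: long_pairs_def card_cartesian_product power2_eq_square)

lemma long_pair_midpoint_to_endpoint:
  assumes N: "is_norm N" and "N (w - a) \<le> N (v - w)" "N (v - w) < 2 * t" "t' \<le> 2 * t - N (v - w)"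
    and "t \<le> N (midpoint v w - a)"
  shows "a \<noteq> w" "t' \<le> N (v - a)"
proof -
  show "a \<noteq> w"
    using assms(3,5) is_norm_midpoint_endpoint[OF N, of v w] by auto
  show "t' \<le> N (v - a)"
    using assms(2-5) is_norm_midpoint_le[OF N, of v w a] by linarith
qed

lemma long_pairs_bisection_half_image:
  assumes N: "is_norm N" and S: "v \<in> S" "w \<in> S" "midpoint v w \<notin> S"
    and longest: "\<forall>a\<in>S. \<forall>b\<in>S. N (a - b) \<le> N (v - w)"
    and t: "N (v - w) < 2 * t" "t' \<le> 2 * t - N (v - w)"
  defines "g \<equiv> \<lambda>a. if a = midpoint v w then v else a"
  shows "map_prod g g ` long_pairs N t (insert (midpoint v w) (S - {v}))
      \<subseteq> long_pairs N t' S - {(v, w)}"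
proof
  fix q assume "q \<in> map_prod g g ` long_pairs N t (insert (midpoint v w) (S - {v}))"
  then obtain a b where q: "q = (g a, g b)"
    and "(a, b) \<in> long_pairs N t (insert (midpoint v w) (S - {v}))"
    by auto
  then have ab: "a \<in> insert (midpoint v w) (S - {v})" "b \<in> insert (midpoint v w) (S - {v})"
      "t \<le> N (a - b)"
    by (auto simp: long_pairs_def)
  have mid: "a' \<noteq> w \<and> t' \<le> N (v - a') \<and> t' \<le> N (a' - v)"
    if "a' \<in> S" "t \<le> N (midpoint v w - a')" for a'
    using long_pair_midpoint_to_endpoint[OF N _ t that(2)] longest that(1) S(2)
      is_norm_minus_commute[OF N, of a' v] by auto
  have "0 < t"
    using t(1) is_norm_nonneg[OF N, of "v - w"] by linarith
  then have "a \<noteq> midpoint v w \<or> b \<noteq> midpoint v w"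
    using ab(3) is_norm_eq_zero[OF N, of 0] by auto
  moreover have "t \<le> N (b - a)"
    using ab(3) is_norm_minus_commute[OF N, of a b] by simp
  moreover have "t' \<le> N (a - b)" if "a \<in> S" "b \<in> S"
    using ab(3) longest that t by force
  moreover have "g a' = a'" if "a' \<in> S" for a'
    using that S(3) unfolding g_def by auto
  ultimately show "q \<in> long_pairs N t' S - {(v, w)}"
    using q ab mid[of a] mid[of b] S by (auto simp: long_pairs_def g_def)
qed

lemma card_long_pairs_bisection_half_less:
  assumes N: "is_norm N" and S: "finite S" "v \<in> S" "w \<in> S" "midpoint v w \<notin> S"
    and longest: "\<forall>a\<in>S. \<forall>b\<in>S. N (a - b) \<le> N (v - w)"
    and t: "t' \<le> N (v - w)" "N (v - w) < 2 * t" "t' \<le> 2 * t - N (v - w)"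
  shows "card (long_pairs N t (insert (midpoint v w) (S - {v}))) < card (long_pairs N t' S)"
proof -
  let ?X = "insert (midpoint v w) (S - {v})"
  let ?g = "\<lambda>a. if a = midpoint v w then v else a"
  let ?f = "map_prod ?g ?g"
  have fin: "finite (long_pairs N t' S)"
    using S(1) by (simp add: long_pairs_def)
  have "inj_on ?f (long_pairs N t ?X)"
    using S unfolding inj_on_def long_pairs_def by auto
  then have "card (long_pairs N t ?X) = card (?f ` long_pairs N t ?X)"
    by (simp add: card_image)
  also have "\<dots> \<le> card (long_pairs N t' S - {(v, w)})"
    using long_pairs_bisection_half_image[OF N S(2-4) longest t(2,3)] fin by (intro card_mono) auto
  also have "\<dots> < card (long_pairs N t' S)"
    using S t(1) fin by (intro card_Diff1_less) (auto simp: long_pairs_def)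
  finally show ?thesis .
qed

lemma card_below_shift_less:
  fixes e f :: "nat \<Rightarrow> nat"
  assumes "\<forall>j. f j \<le> J" "\<forall>j. e j \<le> J" "\<forall>j<J. f j < e (Suc j)" "0 < e 0"
  shows "card {j. j < f j} < card {j. j < e j}"
proof -
  have fin: "finite {j. j < e j}"
  proof (rule finite_subset)
    show "{j. j < e j} \<subseteq> {..<J}"
      using assms(2) order.strict_trans2 by blast
  qed simp
  have "Suc j < e (Suc j)" if j: "j < f j" for j
  proof -
    have "j < J"
      using j assms(1) less_le_trans by blast
    then have "f j < e (Suc j)"
      using assms(3) by blast
    then show ?thesis
      using j by simp
  qed
  then have "Suc ` {j. j < f j} \<subseteq> {j. j < e j} - {0}"
    by auto
  then have "card (Suc ` {j. j < f j}) \<le> card ({j. j < e j} - {0})"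
    using fin by (intro card_mono) auto
  then have "card {j. j < f j} \<le> card ({j. j < e j} - {0})"
    by (simp add: card_image)
  also have "\<dots> < card {j. j < e j}"
    using fin assms(4) by (intro psubset_card_mono) auto
  finally show ?thesis .
qed
definition threshold_rank :: "('a::real_vector \<Rightarrow> real) \<Rightarrow> (nat \<Rightarrow> real) \<Rightarrow> 'a set \<Rightarrow> nat" where
  "threshold_rank N t S = card {j. j < card (long_pairs N (t j) S)}"

lemma threshold_rank_bisection_half_less:
  assumes N: "is_norm N" and S: "finite S" "v \<in> S" "w \<in> S" "midpoint v w \<notin> S"
    and longest: "\<forall>a\<in>S. \<forall>b\<in>S. N (a - b) \<le> N (v - w)"
    and t_le: "\<forall>j. t j \<le> N (v - w)"
    and t_gaps: "\<forall>j < card S ^ 2. N (v - w) < 2 * t j \<and> t (Suc j) \<le> 2 * t j - N (v - w)"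
  shows "threshold_rank N t (insert (midpoint v w) (S - {v})) < threshold_rank N t S"
  unfolding threshold_rank_def
proof (rule card_below_shift_less)
  let ?X = "insert (midpoint v w) (S - {v})"
  have "card ?X = card S"
    using card_exchange[OF S(1,2,4)] .
  then show "\<forall>j. card (long_pairs N (t j) ?X) \<le> card S ^ 2" "\<forall>j. card (long_pairs N (t j) S) \<le> card S ^ 2"
    using card_long_pairs_le[of ?X N] card_long_pairs_le[of S N] S(1) by auto
  show "\<forall>j<card S ^ 2. card (long_pairs N (t j) ?X) < card (long_pairs N (t (Suc j)) S)"
    using card_long_pairs_bisection_half_less[OF N S longest] t_le t_gaps by blast
  have "(v, w) \<in> long_pairs N (t 0) S"
    using S t_le by (simp add: long_pairs_def)
  then show "0 < card (long_pairs N (t 0) S)"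
    using S(1) card_gt_0_iff by (fastforce simp: long_pairs_def)
qed

lemma sum_pow3_split_less:
  fixes \<rho> :: "'a \<Rightarrow> nat"
  assumes "finite \<K>" "P \<subseteq> \<K>" "P \<noteq> {}" "\<forall>C\<in>P. \<rho> (f C) < \<rho> C \<and> \<rho> (g C) < \<rho> C"
  shows "(\<Sum>X \<in> (\<K> - P) \<union> f ` P \<union> g ` P. 3 ^ \<rho> X) < (\<Sum>C\<in>\<K>. 3 ^ \<rho> C :: nat)"
proof -
  have P: "finite P" using assms(1,2) finite_subset by blast
  have halves: "3 ^ \<rho> (f C) + 3 ^ \<rho> (g C) < (3 ^ \<rho> C :: nat)" if C: "C \<in> P" for C
  proof -
    obtain k where k: "\<rho> C = Suc k"
      using assms(4) C by (cases "\<rho> C") auto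
    have "(3::nat) ^ \<rho> (f C) \<le> 3 ^ k" "(3::nat) ^ \<rho> (g C) \<le> 3 ^ k"
      using assms(4) C k by (auto intro!: power_increasing)
    then have "3 ^ \<rho> (f C) + 3 ^ \<rho> (g C) \<le> (3 ^ k + 3 ^ k :: nat)"
      by (rule add_mono)
    moreover have "0 < (3::nat) ^ k"
      by simp
    ultimately show ?thesis
      unfolding k power_Suc by linarith
  qed
  have "(\<Sum>X \<in> (\<K> - P) \<union> f ` P \<union> g ` P. 3 ^ \<rho> X)
      \<le> (\<Sum>X \<in> \<K> - P. 3 ^ \<rho> X) + (\<Sum>X \<in> f ` P. 3 ^ \<rho> X) + (\<Sum>X \<in> g ` P. 3 ^ \<rho> X :: nat)"
  proof -
    have Un_le: "(\<Sum>X \<in> A \<union> B. 3 ^ \<rho> X) \<le> (\<Sum>X\<in>A. 3 ^ \<rho> X) + (\<Sum>X\<in>B. 3 ^ \<rho> X :: nat)"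
      if "finite A" "finite B" for A B
      using sum_Un_nat[OF that, of "\<lambda>X. 3 ^ \<rho> X"] by simp
    show ?thesis
      using Un_le[of "(\<K> - P) \<union> f ` P" "g ` P"] Un_le[of "\<K> - P" "f ` P"] assms(1) P by simp
  qed
  also have "\<dots> \<le> (\<Sum>X \<in> \<K> - P. 3 ^ \<rho> X) + (\<Sum>C\<in>P. 3 ^ \<rho> (f C) + 3 ^ \<rho> (g C))"
    using P sum_image_le[of P "\<lambda>X. 3 ^ \<rho> X :: nat" f] sum_image_le[of P "\<lambda>X. 3 ^ \<rho> X :: nat" g]
    by (simp add: sum.distrib)
  also have "\<dots> < (\<Sum>X \<in> \<K> - P. 3 ^ \<rho> X) + (\<Sum>C\<in>P. 3 ^ \<rho> C)"
    using P assms(3) halves by (simp add: sum_strict_mono)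
  also have "\<dots> = (\<Sum>C\<in>\<K>. 3 ^ \<rho> C)"
    by (simp add: sum.subset_diff[OF assms(2,1)])
  finally show ?thesis .
qed

lemma bisect_potential_less:
  assumes N: "is_norm N" and \<K>: "conforming_triangulation n \<K>"
    and longest: "is_longest_edge N v w \<K>" and vw: "v \<noteq> w"
    and t_le: "\<forall>j. t j \<le> N (v - w)"
    and t_gaps: "\<forall>j < (n + 1) ^ 2. N (v - w) < 2 * t j \<and> t (Suc j) \<le> 2 * t j - N (v - w)"
  shows "(\<Sum>C\<in>bisect v w \<K>. 3 ^ threshold_rank N t (extreme_points C))
       < (\<Sum>C\<in>\<K>. 3 ^ threshold_rank N t (extreme_points C) :: nat)"
proof -
  let ?P = "edge_patch v w \<K>"
  let ?\<rho> = "\<lambda>C. threshold_rank N t (extreme_points C)"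
  have "\<forall>C\<in>\<K>. \<exists>n. n simplex C"
    using \<K> unfolding conforming_triangulation_def by blast
  note eq = bisect_eq[OF this, of v w]
  have rank_less: "?\<rho> (bisection_half z z' (extreme_points C)) < ?\<rho> C"
    if C: "C \<in> ?P" and zz': "(z, z') \<in> {(v, w), (w, v)}" for C z z'
  proof -
    let ?S = "extreme_points C"
    have CK: "C \<in> \<K>" and zS: "z \<in> ?S" "z' \<in> ?S"
      using C zz' by (auto simp: edge_patch_def)
    note S = conforming_triangulation_memberD[OF \<K> CK]
    have zz'_vw: "z \<noteq> z'" "N (z - z') = N (v - w)"
      using zz' vw is_norm_minus_commute[OF N, of v w] by auto
    have "\<forall>a\<in>?S. \<forall>b\<in>?S. N (a - b) \<le> N (z - z')"
      using longest CK zz'_vw(2) unfolding is_longest_edge_def is_edge_of_def by auto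
    then show ?thesis
      using threshold_rank_bisection_half_less[OF N S(2) zS midpoint_notin_affine_independent[OF S(1) zS zz'_vw(1)]]
        t_le t_gaps S(3) zz'_vw(2)
      by (simp add: extreme_points_bisection_half[OF S(1) zS zz'_vw(1)])
  qed
  have "?P \<noteq> {}"
    using longest unfolding is_longest_edge_def is_edge_of_def edge_patch_def by blast
  moreover have "?P \<subseteq> \<K>" "finite \<K>"
    using \<K> by (auto simp: edge_patch_def conforming_triangulation_def)
  ultimately show ?thesis
    unfolding eq using rank_less by (intro sum_pow3_split_less) auto
qed

lemma halving_thresholds:
  fixes L U l :: real
  assumes "L \<le> l" "l \<le> U" "(U - L) * 2 ^ J < L"
  shows "U - 2 ^ j * (U - L) \<le> l"
    and "j < J \<Longrightarrow> l < 2 * (U - 2 ^ j * (U - L))"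
    and "U - 2 ^ Suc j * (U - L) \<le> 2 * (U - 2 ^ j * (U - L)) - l"
proof -
  have "U - L \<le> 2 ^ j * (U - L)"
    using assms(1,2) by (simp add: mult_le_cancel_right1)
  then show "U - 2 ^ j * (U - L) \<le> l"
    using assms(1) by simp
  show "l < 2 * (U - 2 ^ j * (U - L))" if "j < J"
  proof -
    have "2 ^ Suc j * (U - L) \<le> 2 ^ J * (U - L)"
      using that assms(1,2) by (intro mult_right_mono power_increasing) auto
    then show ?thesis
      using assms by (simp add: mult.commute)
  qed
  show "U - 2 ^ Suc j * (U - L) \<le> 2 * (U - 2 ^ j * (U - L)) - l"
    using assms(2) by simp
qed

section \<open>Convergence of the mesh size\<close>

lemma longest_edge_bisection_conforming:
  fixes \<K> :: "nat \<Rightarrow> 'a::euclidean_space set set"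
  assumes N: "is_norm N" and n: "1 \<le> n" and C0: "int n simplex C0" and init: "\<K> 0 = {C0}"
    and longest: "\<And>r. is_longest_edge N (V r) (W r) (\<K> r)"
    and step: "\<And>r. \<K> (Suc r) = bisect (V r) (W r) (\<K> r)"
  shows "conforming_triangulation n (\<K> r) \<and> C0 \<subseteq> \<Union>(\<K> r)"
proof (induction r)
  case 0
  then show ?case
    using conforming_triangulation_singleton[OF C0] init by simp
next
  case (Suc r)
  then have "V r \<noteq> W r"
    using longest_edge_neq[OF N _ n longest] by blast
  then show ?case
    using Suc conforming_bisect Union_subset_Union_bisect unfolding step by blast
qed

locale longest_edge_bisection =
  fixes N :: "'a::euclidean_space \<Rightarrow> real" and n :: nat
    and \<K> :: "nat \<Rightarrow> 'a set set" and V W :: "nat \<Rightarrow> 'a"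
  assumes norm: "is_norm N"
    and conforming: "\<And>r. conforming_triangulation n (\<K> r)"
    and longest: "\<And>r. is_longest_edge N (V r) (W r) (\<K> r)"
    and step: "\<And>r. \<K> (Suc r) = bisect (V r) (W r) (\<K> r)"
    and neq: "\<And>r. V r \<noteq> W r"
begin

lemma decseq_longest_edge: "decseq (\<lambda>r. N (V r - W r))"
proof (rule decseq_SucI)
  fix r
  show "N (V (Suc r) - W (Suc r)) \<le> N (V r - W r)"
    using bisect_edge_le[OF norm conforming longest neq] longest[of "Suc r"]
    unfolding step is_longest_edge_def by blast
qed

lemma longest_edge_limit_nonpos:
  assumes lim: "(\<lambda>r. N (V r - W r)) \<longlonglongrightarrow> L"
  shows "L \<le> 0"
proof (rule ccontr)
  assume "\<not> L \<le> 0"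
  define l where "l r = N (V r - W r)" for r
  define J where "J = (n + 1) ^ 2"
  note dec = decseq_longest_edge[folded l_def]
  have "0 < L / 2 ^ J"
    using \<open>\<not> L \<le> 0\<close> by simp
  then obtain R where R: "\<bar>l R - L\<bar> < L / 2 ^ J"
    using LIMSEQ_D[OF lim] unfolding l_def by (metis order_refl real_norm_def)
  define U where "U = l R"
  define t where "t j = U - 2 ^ j * (U - L)" for j
  have window: "L \<le> l r" "l r \<le> U" if "R \<le> r" for r
    using decseq_ge[OF dec lim[folded l_def]] decseqD[OF dec that] unfolding U_def by auto
  have small: "(U - L) * 2 ^ J < L"
    using R window[of R] unfolding U_def by (simp add: pos_less_divide_eq)
  define \<Phi> where "\<Phi> r = (\<Sum>C\<in>\<K> r. 3 ^ threshold_rank N t (extreme_points C) :: nat)" for r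
  have descent: "\<Phi> (Suc r) < \<Phi> r" if "R \<le> r" for r
    unfolding \<Phi>_def step
    using halving_thresholds[OF window[OF that] small] unfolding t_def[symmetric] J_def l_def
    by (intro bisect_potential_less[OF norm conforming longest neq]) auto
  have "\<Phi> (R + k) + k \<le> \<Phi> R" for k
  proof (induction k)
    case (Suc k)
    have "\<Phi> (Suc (R + k)) < \<Phi> (R + k)"
      by (rule descent) simp
    then show ?case
      using Suc.IH by simp
  qed simp
  then show False
    using le_add2 not_less_eq_eq by blast
qed

lemma longest_edge_tendsto_zero: "(\<lambda>r. N (V r - W r)) \<longlonglongrightarrow> 0"
proof -
  have nonneg: "\<forall>r. 0 \<le> N (V r - W r)"
    using is_norm_nonneg[OF norm] by blast
  then obtain L where lim: "(\<lambda>r. N (V r - W r)) \<longlonglongrightarrow> L"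
    using decseq_convergent[OF decseq_longest_edge] by blast
  have "0 \<le> L"
    using nonneg lim LIMSEQ_le_const by blast
  then show ?thesis
    using lim longest_edge_limit_nonpos[OF lim] by simp
qed

end

theorem proposition3p9:
  fixes N :: "real^'m \<Rightarrow> real"
    and Y :: "(real^'m) set"
    and C0 :: "(real^'m) set"
    and \<CC> :: "nat \<Rightarrow> (real^'m) set set"
  assumes "is_norm N"
    and "bounded Y"
    and "int CARD('m) simplex C0"
    and "Y \<subseteq> C0"
    and "\<CC> 0 = {C0}"
    and "\<And>r. r \<ge> 1 \<Longrightarrow> \<exists>v w. is_longest_edge N v w (\<CC> (r - 1)) \<and> \<CC> r = bisect v w (\<CC> (r - 1))"
  shows "(\<forall>r. simplicial_cover Y (\<CC> r)) \<and> (\<lambda>r. mesh_size N (\<CC> r)) \<longlonglongrightarrow> 0"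
proof -
  have "\<forall>r. \<exists>v w. is_longest_edge N v w (\<CC> r) \<and> \<CC> (Suc r) = bisect v w (\<CC> r)"
    using assms(6) by fastforce
  then obtain V W where longest: "\<And>r. is_longest_edge N (V r) (W r) (\<CC> r)"
    and step: "\<And>r. \<CC> (Suc r) = bisect (V r) (W r) (\<CC> r)"
    by metis
  have dim: "1 \<le> CARD('m)"
    by (simp add: Suc_leI)
  note invariant = longest_edge_bisection_conforming[where \<K> = \<CC> and V = V and W = W,
      OF assms(1) dim assms(3,5) longest step]
  then have conforming: "conforming_triangulation CARD('m) (\<CC> r)" for r
    by blast
  have neq: "V r \<noteq> W r" for r
    by (rule longest_edge_neq[OF assms(1) conforming dim longest])
  interpret longest_edge_bisection N "CARD('m)" \<CC> V W
    using assms(1) conforming longest step neq by unfold_locales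
  have "mesh_size N (\<CC> r) = N (V r - W r)" for r
    using conforming_triangulation_memberD(2)[OF conforming[of r]] conforming[of r]
    by (intro mesh_size_eq_longest_edge[OF _ _ longest]) (auto simp: conforming_triangulation_def)
  moreover have "simplicial_cover Y (\<CC> r)" for r
    using conforming_triangulation_simplicial_cover[OF conforming] invariant assms(4) by blast
  ultimately show ?thesis
    using longest_edge_tendsto_zero by simp
qed

end
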